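(* Let $G$ be a compact Lie group with Lie algebra $\mathfrak g$ and bi-invariant metric $h_0$, and let $h$ be a left-invariant metric on $G$ with nonnegative sectional curvature. Then the unique inverse-linear path from $h_0$ to $h$ is infinitesimally nonnegative.
   Context: Write $\langle Z_1,Z_2\rangle=h_0(Z_1,Z_2)$ and $|Z|^2=\langle Z,Z\rangle$ for $Z_1,Z_2,Z\in\mathfrak g$. Every left-invariant metric $h$ on $G$ is determined by its restriction to $\mathfrak g$, and there is a unique $h_0$-self-adjoint positive definite endomorphism $\Phi\colon\mathfrak g\to\mathfrak g$ (the matrix of $h$) with $h(X,Y)=\langle \Phi X,Y\rangle$ for $X,Y\in\mathfrak g$. An inverse-linear path is a family $\Phi_t=(I-t\Psi)^{-1}$, where $\Psi\colon\mathfrak g\to\mathfrak g$ is $h_0$-self-adjoint; $h_t$ denotes the left-invariant metric with matrix $\Phi_t$, defined for $t$ in the open interval containing $0$ on which $I-t\Psi$ is positive definite. The unique inverse-linear path from $h_0$ to $h$ is the one with $\Phi_1=\Phi$, i.e. $\Psi=I-\Phi^{-1}$. For a left-invariant metric $h$ and $Z_1,Z_2\in\mathfrak g$, the unnormalized sectional curvature $k_h(Z_1,Z_2)=h(R_h(Z_1,Z_2)Z_2,Z_1)$ (not divided by $|Z_1\wedge Z_2|^2$); for $h_0$ it equals $\tfrac14|[Z_1,Z_2]|^2$. For fixed $X,Y\in\mathfrak g$, define $\kappa^\Psi(t)=k_{h_t}(\Phi_t^{-1}X,\Phi_t^{-1}Y)$ on the domain of $h_t$. The path (or $\Psi$) is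 infinitesimally nonnegative if for every $X,Y\in\mathfrak g$ there is $\varepsilon>0$ such that the associated function satisfies $\kappa^\Psi(t)\ge 0$ for all $t\in[0,\varepsilon)$. *)

theory Defs
  imports "HOL-Analysis.Analysis"
begin

text \<open>The Lie algebra g of a compact Lie group G is modelled as a finite-dimensional
real inner product space (type class euclidean_space); its inner product is the
bi-invariant metric h0.\<close>

definition compact_lie_algebra :: "('a::euclidean_space \<Rightarrow> 'a \<Rightarrow> 'a) \<Rightarrow> bool" where
  "compact_lie_algebra br \<longleftrightarrow>
     bilinear br \<and>
     (\<forall>x. br x x = 0) \<and>
     (\<forall>x y z. br x (br y z) + br y (br z x) + br z (br x y) = 0) \<and>
     (\<forall>x y z. br x y \<bullet> z = x \<bullet> br y z)"

text \<open>Matrix of a left-invariant metric: h0-self-adjoint positive definite endomorphism.\<close>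

definition metric_matrix :: "('a::euclidean_space \<Rightarrow> 'a) \<Rightarrow> bool" where
  "metric_matrix \<Phi> \<longleftrightarrow>
     linear \<Phi> \<and> (\<forall>x y. \<Phi> x \<bullet> y = x \<bullet> \<Phi> y) \<and> (\<forall>x. x \<noteq> 0 \<longrightarrow> \<Phi> x \<bullet> x > 0)"

text \<open>Levi-Civita connection of the left-invariant metric h(X,Y) = <Phi X, Y> on
left-invariant fields, via the Koszul formula.\<close>

definition lc_conn :: "('a::euclidean_space \<Rightarrow> 'a \<Rightarrow> 'a) \<Rightarrow> ('a \<Rightarrow> 'a) \<Rightarrow> 'a \<Rightarrow> 'a \<Rightarrow> 'a" where
  "lc_conn br \<Phi> X Y = (THE W. \<forall>Z. 2 * (\<Phi> W \<bullet> Z) =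
       \<Phi> (br X Y) \<bullet> Z - \<Phi> (br Y Z) \<bullet> X + \<Phi> (br Z X) \<bullet> Y)"

definition curv :: "('a::euclidean_space \<Rightarrow> 'a \<Rightarrow> 'a) \<Rightarrow> ('a \<Rightarrow> 'a) \<Rightarrow> 'a \<Rightarrow> 'a \<Rightarrow> 'a \<Rightarrow> 'a" where
  "curv br \<Phi> X Y Z = lc_conn br \<Phi> X (lc_conn br \<Phi> Y Z) - lc_conn br \<Phi> Y (lc_conn br \<Phi> X Z)
       - lc_conn br \<Phi> (br X Y) Z"

text \<open>Unnormalized sectional curvature k_h(X,Y) = h(R(X,Y)Y, X).\<close>

definition sec_k :: "('a::euclidean_space \<Rightarrow> 'a \<Rightarrow> 'a) \<Rightarrow> ('a \<Rightarrow> 'a) \<Rightarrow> 'a \<Rightarrow> 'a \<Rightarrow> real" where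
  "sec_k br \<Phi> X Y = \<Phi> (curv br \<Phi> X Y Y) \<bullet> X"

definition path_inv :: "('a::euclidean_space \<Rightarrow> 'a) \<Rightarrow> real \<Rightarrow> 'a \<Rightarrow> 'a" where
  "path_inv \<Psi> t = (\<lambda>v. v - t *\<^sub>R \<Psi> v)"

definition path_mat :: "('a::euclidean_space \<Rightarrow> 'a) \<Rightarrow> real \<Rightarrow> 'a \<Rightarrow> 'a" where
  "path_mat \<Psi> t = inv (path_inv \<Psi> t)"

definition kappa :: "('a::euclidean_space \<Rightarrow> 'a \<Rightarrow> 'a) \<Rightarrow> ('a \<Rightarrow> 'a) \<Rightarrow> 'a \<Rightarrow> 'a \<Rightarrow> real \<Rightarrow> real" where
  "kappa br \<Psi> X Y t = sec_k br (path_mat \<Psi> t) (path_inv \<Psi> t X) (path_inv \<Psi> t Y)"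

definition infinitesimally_nonneg :: "('a::euclidean_space \<Rightarrow> 'a \<Rightarrow> 'a) \<Rightarrow> ('a \<Rightarrow> 'a) \<Rightarrow> bool" where
  "infinitesimally_nonneg br \<Psi> \<longleftrightarrow>
     (\<forall>X Y. \<exists>\<epsilon>>0. \<forall>t. 0 \<le> t \<and> t < \<epsilon> \<longrightarrow>
        metric_matrix (path_inv \<Psi> t) \<and> 0 \<le> kappa br \<Psi> X Y t)"

text \<open>Psi of the unique inverse-linear path from h0 to the metric with matrix Phi.\<close>

definition psi_of :: "('a::euclidean_space \<Rightarrow> 'a) \<Rightarrow> 'a \<Rightarrow> 'a" where
  "psi_of \<Phi> = (\<lambda>v. v - inv \<Phi> v)"

end

theory Submission
  imports Defs
begin

text \<open>
  Write \<open>P = \<Phi>\<inverse>\<close>. Along the inverse-linear path \<open>\<Phi>\<^sub>t\<inverse> = t P + (1 - t) I\<close>, so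
  \<open>\<kappa>(t) = C(t P + (1 - t) I)\<close>, where \<open>C(P)\<close> is the Koszul-formula expression of
  \<open>k\<^sub>\<Phi>(P X, P Y)\<close> for \<open>\<Phi> = P\<inverse>\<close>. Apart from the single term \<open>-3/4 \<langle>\<Phi> W, W\<rangle>\<close>,
  \<open>W = [P X, P Y]\<close>, this expression is a polynomial in \<open>P\<close>, and \<open>C\<close> is monotone under
  \<open>P \<mapsto> P + s I\<close> for \<open>s > 0\<close>: the \<open>\<Phi>\<close>-term is controlled by the parallel-sum inequality
  for \<open>(P + s I)\<inverse>\<close>, the terms of first order in \<open>s\<close> cancel by the Jacobi identity, and
  \<open>s\<^sup>3 |[X, Y]|\<^sup>2 / 4 \<ge> 0\<close> remains. Since \<open>C\<close> is homogeneous of degree 3,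
  \<open>\<kappa>(t) \<ge> C(t P) = t\<^sup>3 k\<^sub>\<Phi>(P X, P Y) \<ge> 0\<close> for all \<open>0 < t < 1\<close>, and
  \<open>\<kappa>(0) = |[X, Y]|\<^sup>2 / 4\<close>.
\<close>

definition selfadjoint_inverses :: "('a::euclidean_space \<Rightarrow> 'a) \<Rightarrow> ('a \<Rightarrow> 'a) \<Rightarrow> bool" where
  "selfadjoint_inverses P \<Phi> \<longleftrightarrow> linear P \<and> linear \<Phi> \<and> (\<forall>v. \<Phi> (P v) = v) \<and> (\<forall>v. P (\<Phi> v) = v)
     \<and> (\<forall>x y. \<Phi> x \<bullet> y = x \<bullet> \<Phi> y)"

lemma selfadjoint_inversesD:
  assumes "selfadjoint_inverses P \<Phi>"
  shows "linear P" "linear \<Phi>" "\<Phi> (P v) = v" "P (\<Phi> v) = v" "\<Phi> x \<bullet> y = x \<bullet> \<Phi> y"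
    and selfadjoint_inverses_inner_left: "P x \<bullet> y = x \<bullet> P y"
proof -
  show "linear P" "linear \<Phi>"
    using assms unfolding selfadjoint_inverses_def by blast+
  show cancel: "\<Phi> (P v) = v" "P (\<Phi> v) = v" for v
    using assms unfolding selfadjoint_inverses_def by blast+
  show sa: "\<Phi> x \<bullet> y = x \<bullet> \<Phi> y" for x y
    using assms unfolding selfadjoint_inverses_def by blast
  have "P x \<bullet> y = P x \<bullet> \<Phi> (P y)"
    by (simp only: cancel)
  also have "\<dots> = \<Phi> (P x) \<bullet> P y"
    by (rule sa[symmetric])
  also have "\<dots> = x \<bullet> P y"
    by (simp only: cancel)
  finally show "P x \<bullet> y = x \<bullet> P y" .
qed

lemma selfadjoint_inverses_commute:
  "selfadjoint_inverses P \<Phi> \<Longrightarrow> selfadjoint_inverses \<Phi> P"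
  using selfadjoint_inversesD[of P \<Phi>] unfolding selfadjoint_inverses_def by blast

lemma selfadjoint_inverses_scaleR:
  assumes "selfadjoint_inverses P \<Phi>" and "t \<noteq> 0"
  shows "selfadjoint_inverses (\<lambda>v. t *\<^sub>R P v) (\<lambda>v. (1/t) *\<^sub>R \<Phi> v)"
  using selfadjoint_inversesD[OF assms(1)] \<open>t \<noteq> 0\<close>
  by (simp add: selfadjoint_inverses_def linear_compose_scale_right linear_scale)

lemma metric_matrix_nonneg: "metric_matrix M \<Longrightarrow> 0 \<le> M z \<bullet> z"
  unfolding metric_matrix_def by (cases "z = 0") (auto intro: less_imp_le)

lemma metric_matrix_selfadjoint_inverses:
  assumes "metric_matrix M"
  shows "selfadjoint_inverses (inv M) M"
proof -
  have lin: "linear M" and pos: "\<And>x. x \<noteq> 0 \<Longrightarrow> M x \<bullet> x > 0"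
    using assms unfolding metric_matrix_def by auto
  have "inj M"
    using pos by (force simp: linear_injective_0[OF lin])
  moreover have "surj M"
    using eucl.linear_inj_imp_surj[OF lin \<open>inj M\<close>] .
  ultimately have "\<forall>v. M (inv M v) = v" "\<forall>v. inv M (M v) = v"
    by (simp_all add: surj_f_inv_f inv_f_f)
  then show ?thesis
    using assms eucl.inj_linear_imp_inv_linear[OF lin \<open>inj M\<close>]
    unfolding selfadjoint_inverses_def metric_matrix_def by blast
qed

lemma metric_matrix_inv:
  assumes "metric_matrix M"
  shows "metric_matrix (inv M)"
  unfolding metric_matrix_def
proof (intro conjI allI impI)
  note MI = selfadjoint_inversesD[OF metric_matrix_selfadjoint_inverses[OF assms]]
  show "linear (inv M)" "inv M x \<bullet> y = x \<bullet> inv M y" for x y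
    using MI by auto
  show "inv M z \<bullet> z > 0" if "z \<noteq> 0" for z
  proof -
    have "inv M z \<noteq> 0"
      using that MI(3)[of z] linear_0[OF MI(2)] by auto
    then have "M (inv M z) \<bullet> inv M z > 0"
      using assms unfolding metric_matrix_def by blast
    then show ?thesis
      by (simp add: MI(3) inner_commute)
  qed
qed

lemma metric_matrix_convex_combination_id:
  assumes "metric_matrix A" and "0 \<le> t" and "t < 1"
  shows "metric_matrix (\<lambda>v. t *\<^sub>R A v + (1 - t) *\<^sub>R v)"
  unfolding metric_matrix_def
proof (intro conjI allI impI)
  have A: "linear A" "\<And>x y. A x \<bullet> y = x \<bullet> A y"
    using assms(1) unfolding metric_matrix_def by auto
  show "linear (\<lambda>v. t *\<^sub>R A v + (1 - t) *\<^sub>R v)"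
    using A by (intro linear_compose_add linear_compose_scale_right linear_ident)
  show "(t *\<^sub>R A x + (1 - t) *\<^sub>R x) \<bullet> y = x \<bullet> (t *\<^sub>R A y + (1 - t) *\<^sub>R y)" for x y
    using A by (simp add: inner_add_left inner_add_right)
  show "(t *\<^sub>R A x + (1 - t) *\<^sub>R x) \<bullet> x > 0" if "x \<noteq> 0" for x
  proof -
    have "0 \<le> t * (A x \<bullet> x)"
      using assms metric_matrix_nonneg[OF assms(1)] by simp
    moreover have "0 < (1 - t) * (x \<bullet> x)"
      using assms that by simp
    ultimately show ?thesis
      by (simp add: inner_add_left)
  qed
qed

lemma path_inv_psi_of: "path_inv (psi_of \<Phi>) t v = t *\<^sub>R inv \<Phi> v + (1 - t) *\<^sub>R v"
  by (simp add: path_inv_def psi_of_def algebra_simps)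

lemma metric_matrix_path_inv:
  assumes "metric_matrix \<Phi>" and "0 \<le> t" and "t < 1"
  shows "metric_matrix (path_inv (psi_of \<Phi>) t)"
  unfolding path_inv_psi_of
  by (rule metric_matrix_convex_combination_id[OF metric_matrix_inv]) (use assms in auto)

lemma parallel_sum_inner_le:
  assumes PQ: "selfadjoint_inverses P \<Phi>" and PQ': "selfadjoint_inverses P' \<Phi>'"
    and shift: "\<And>v. P' v = P v + s *\<^sub>R v" and "s > 0" and nonneg: "\<And>z. 0 \<le> \<Phi> z \<bullet> z"
  shows "\<Phi>' (w + w') \<bullet> (w + w') \<le> \<Phi> w \<bullet> w + (w' \<bullet> w') / s"
proof -
  \<comment> \<open>With \<open>\<xi> = \<Phi>' (w + w')\<close> the claim is the sum of
    \<open>0 \<le> \<langle>\<Phi> (w - P \<xi>), w - P \<xi>\<rangle>\<close> and \<open>0 \<le> |w' - s \<xi>|\<^sup>2 / s\<close>.\<close>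
  note PQ = selfadjoint_inversesD[OF PQ]
  define \<xi> where "\<xi> = \<Phi>' (w + w')"
  have "P \<xi> + s *\<^sub>R \<xi> = w + w'"
    using selfadjoint_inversesD(4)[OF PQ', of "w + w'"] unfolding \<xi>_def shift .
  then have "\<xi> \<bullet> P \<xi> + s * (\<xi> \<bullet> \<xi>) = \<xi> \<bullet> w + \<xi> \<bullet> w'"
    by (metis inner_add_right inner_scaleR_right)
  moreover have "\<Phi>' (w + w') \<bullet> (w + w') = \<xi> \<bullet> w + \<xi> \<bullet> w'"
    unfolding \<xi>_def by (rule inner_add_right)
  moreover have "0 \<le> \<Phi> w \<bullet> w - 2 * (\<xi> \<bullet> w) + \<xi> \<bullet> P \<xi>"
  proof -
    have "0 \<le> \<Phi> (w - P \<xi>) \<bullet> (w - P \<xi>)"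
      by (rule nonneg)
    also have "\<dots> = \<Phi> w \<bullet> w - 2 * (\<xi> \<bullet> w) + \<xi> \<bullet> P \<xi>"
      using PQ(5)[of w "P \<xi>"]
      by (simp add: linear_diff[OF PQ(2)] PQ(3) inner_diff_left inner_diff_right inner_commute)
    finally show ?thesis .
  qed
  moreover have "0 \<le> (w' \<bullet> w') / s - 2 * (\<xi> \<bullet> w') + s * (\<xi> \<bullet> \<xi>)"
  proof -
    have "0 \<le> (w' - s *\<^sub>R \<xi>) \<bullet> (w' - s *\<^sub>R \<xi>) / s"
      using \<open>s > 0\<close> by simp
    also have "\<dots> = (w' \<bullet> w') / s - 2 * (\<xi> \<bullet> w') + s * (\<xi> \<bullet> \<xi>)"
      using \<open>s > 0\<close>
      by (simp add: inner_diff_left inner_diff_right inner_commute field_simps power2_eq_square)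
    finally show ?thesis .
  qed
  ultimately show ?thesis
    by linarith
qed

locale compact_lie_bracket =
  fixes br :: "'a::euclidean_space \<Rightarrow> 'a \<Rightarrow> 'a"
  assumes compact_lie_algebra: "compact_lie_algebra br"
begin

lemma bilinear_bracket: "bilinear br"
  using compact_lie_algebra unfolding compact_lie_algebra_def by blast

lemmas bracket_linear_simps [simp] =
  bilinear_ladd[OF bilinear_bracket] bilinear_radd[OF bilinear_bracket]
  bilinear_lsub[OF bilinear_bracket] bilinear_rsub[OF bilinear_bracket]
  bilinear_lmul[OF bilinear_bracket] bilinear_rmul[OF bilinear_bracket]
  bilinear_lneg[OF bilinear_bracket] bilinear_rneg[OF bilinear_bracket]
  bilinear_lzero[OF bilinear_bracket] bilinear_rzero[OF bilinear_bracket]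

lemma bracket_self [simp]: "br x x = 0"
  using compact_lie_algebra unfolding compact_lie_algebra_def by blast

lemma inner_bracket_assoc: "br x y \<bullet> z = x \<bullet> br y z"
  using compact_lie_algebra unfolding compact_lie_algebra_def by blast

lemma jacobi: "br x (br y z) + br y (br z x) + br z (br x y) = 0"
  using compact_lie_algebra unfolding compact_lie_algebra_def by blast

lemma bracket_antisym: "br y x = - br x y"
proof -
  have "br x y + br y x = 0"
    using bracket_self[of "x + y"] by (simp del: bracket_self) (simp add: add.commute)
  then show ?thesis
    by (simp add: eq_neg_iff_add_eq_0 add.commute)
qed

lemma inner_bracket_self_left [simp]: "br x y \<bullet> x = 0"
  by (metis inner_bracket_assoc inner_commute bracket_self inner_zero_left)

lemma inner_bracket_rotate: "br y w \<bullet> x = w \<bullet> br x y"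
  by (metis inner_bracket_assoc inner_commute)

lemma inner_bracket_rotate_neg: "br w y \<bullet> x = - (w \<bullet> br x y)"
  by (simp add: inner_bracket_assoc bracket_antisym[of y])

lemma inner_bracket_jacobi: "br x y \<bullet> br a b = br a x \<bullet> br b y + br x b \<bullet> br a y"
proof -
  have "br x y \<bullet> br a b = x \<bullet> br y (br a b)"
    by (rule inner_bracket_assoc)
  also have "br y (br a b) = - br a (br b y) - br b (br y a)"
    using jacobi[of y a b] by (simp add: algebra_simps eq_neg_iff_add_eq_0)
  finally show ?thesis
    by (simp add: inner_diff_right inner_bracket_assoc[symmetric] bracket_antisym[of x a]
        bracket_antisym[of y a])
qed

text \<open>The curvature \<open>k\<^sub>\<Phi>(P x, P y)\<close> for \<open>P = \<Phi>\<inverse>\<close>, expanded by the Koszul formula;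
  only the second term is not polynomial in \<open>P\<close>.\<close>

definition curvature_form :: "('a \<Rightarrow> 'a) \<Rightarrow> ('a \<Rightarrow> 'a) \<Rightarrow> 'a \<Rightarrow> 'a \<Rightarrow> real" where
  "curvature_form P \<Phi> x y =
     (1/2) * ((br x (P y) + br (P x) y) \<bullet> br (P x) (P y))
     - (3/4) * (\<Phi> (br (P x) (P y)) \<bullet> br (P x) (P y))
     + (1/4) * ((br (P x) y - br x (P y)) \<bullet> P (br (P x) y - br x (P y)))
     - br (P x) x \<bullet> P (br (P y) y)"

context
  fixes P \<Phi> :: "'a \<Rightarrow> 'a"
  assumes inverses: "selfadjoint_inverses P \<Phi>"
begin

lemma lc_conn_eq: "lc_conn br \<Phi> a b = (1/2) *\<^sub>R (br a b + P (br a (\<Phi> b) + br b (\<Phi> a)))"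
proof -
  note PQ = selfadjoint_inversesD[OF inverses]
  define W0 where "W0 = (1/2) *\<^sub>R (br a b + P (br a (\<Phi> b) + br b (\<Phi> a)))"
  have koszul: "\<Phi> (br a b) \<bullet> z - \<Phi> (br b z) \<bullet> a + \<Phi> (br z a) \<bullet> b = 2 * (\<Phi> W0 \<bullet> z)" for z
  proof -
    have "\<Phi> (br b z) \<bullet> a = br b z \<bullet> \<Phi> a"
      by (rule PQ(5))
    also have "\<dots> = - (br b (\<Phi> a) \<bullet> z)"
      by (simp add: inner_bracket_assoc bracket_antisym[of z])
    finally have 1: "\<Phi> (br b z) \<bullet> a = - (br b (\<Phi> a) \<bullet> z)" .
    have "\<Phi> (br z a) \<bullet> b = br z a \<bullet> \<Phi> b"
      by (rule PQ(5))
    also have "\<dots> = br a (\<Phi> b) \<bullet> z"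
      by (metis inner_bracket_assoc inner_commute)
    finally have 2: "\<Phi> (br z a) \<bullet> b = br a (\<Phi> b) \<bullet> z" .
    show ?thesis
      by (simp add: 1 2 W0_def PQ(3) linear_add[OF PQ(2)] linear_scale[OF PQ(2)] inner_add_left)
  qed
  have unique: "W = W0"
    if "\<forall>z. 2 * (\<Phi> W \<bullet> z) = \<Phi> (br a b) \<bullet> z - \<Phi> (br b z) \<bullet> a + \<Phi> (br z a) \<bullet> b" for W
  proof -
    have "\<forall>z. \<Phi> W \<bullet> z = \<Phi> W0 \<bullet> z"
      using that unfolding koszul by simp
    then have "\<Phi> W = \<Phi> W0"
      by (simp only: vector_eq_rdot)
    then show ?thesis
      by (metis PQ(4))
  qed
  show ?thesis
    unfolding lc_conn_def W0_def[symmetric] by (rule the_equality) (use koszul unique in auto)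
qed

lemma inner_lc_conn:
  "lc_conn br \<Phi> a b \<bullet> x = (1/2) * (br a b \<bullet> x + br a (\<Phi> b) \<bullet> P x + br b (\<Phi> a) \<bullet> P x)"
  by (simp add: lc_conn_eq inner_add_left selfadjoint_inverses_inner_left[OF inverses])

lemma lc_conn_diag: "lc_conn br \<Phi> (P y) (P y) = P (br (P y) y)"
proof -
  note PQ = selfadjoint_inversesD[OF inverses]
  have "lc_conn br \<Phi> (P y) (P y) = (1/2) *\<^sub>R P (br (P y) y + br (P y) y)"
    by (simp add: lc_conn_eq PQ(3))
  then show ?thesis
    by (simp add: linear_add[OF PQ(1)])
qed

lemma lc_conn_inverses:
  "lc_conn br \<Phi> (P x) (P y) = (1/2) *\<^sub>R (br (P x) (P y) + P (br (P x) y - br x (P y)))"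
  using selfadjoint_inversesD[OF inverses]
  by (simp add: lc_conn_eq bracket_antisym[of "P y" x])

lemma inner_lc_conn_diag:
  "lc_conn br \<Phi> (P x) (lc_conn br \<Phi> (P y) (P y)) \<bullet> x = - (br (P x) x \<bullet> P (br (P y) y))"
proof -
  note PQ = selfadjoint_inversesD[OF inverses]
  define e where "e = P (br (P y) y)"
  have "br (P x) e \<bullet> x = - (br (P x) x \<bullet> e)"
    by (metis inner_bracket_rotate inner_bracket_rotate_neg inner_commute)
  moreover have "br e x \<bullet> P x = - (br (P x) x \<bullet> e)"
    by (metis inner_bracket_rotate_neg inner_commute)
  ultimately show ?thesis
    unfolding lc_conn_diag e_def[symmetric] inner_lc_conn by (simp add: e_def PQ(3))
qed

lemma inner_lc_conn_inverses:
  "lc_conn br \<Phi> (P y) (lc_conn br \<Phi> (P x) (P y)) \<bullet> x =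
     (1/4) * (\<Phi> (br (P x) (P y)) \<bullet> br (P x) (P y)
       - P (br (P x) y - br x (P y)) \<bullet> (br (P x) y - br x (P y)))"
proof -
  note PQ = selfadjoint_inversesD[OF inverses]
  define W where "W = br (P x) (P y)"
  define u where "u = br x (P y)"
  define v where "v = br (P x) y"
  define d where "d = v - u"
  have conn: "lc_conn br \<Phi> (P x) (P y) = (1/2) *\<^sub>R (W + P d)"
    unfolding lc_conn_inverses W_def d_def u_def v_def ..
  have "lc_conn br \<Phi> (P y) (lc_conn br \<Phi> (P x) (P y)) \<bullet> x =
      (1/4) * (br (P y) W \<bullet> x + br (P y) (P d) \<bullet> x + br (P y) (\<Phi> W) \<bullet> P x
        + br (P y) d \<bullet> P x + br W y \<bullet> P x + br (P d) y \<bullet> P x)"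
    unfolding inner_lc_conn conn
    by (simp add: PQ(3) linear_add[OF PQ(2)] linear_scale[OF PQ(2)] inner_add_left algebra_simps)
  also have "\<dots> = (1/4) * (W \<bullet> u + P d \<bullet> u + \<Phi> W \<bullet> W + d \<bullet> W - W \<bullet> v - P d \<bullet> v)"
  proof -
    have rot: "br (P y) w \<bullet> z = w \<bullet> br z (P y)" for w z
      by (rule inner_bracket_rotate)
    have rot_neg: "br w y \<bullet> P x = - (w \<bullet> v)" for w
      unfolding v_def by (rule inner_bracket_rotate_neg)
    show ?thesis
      by (simp only: rot rot_neg u_def[symmetric] W_def[symmetric]) simp
  qed
  also have "\<dots> = (1/4) * (\<Phi> W \<bullet> W - P d \<bullet> d)"
    by (simp add: d_def inner_diff_left inner_diff_right inner_commute algebra_simps)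
  finally show ?thesis
    unfolding W_def d_def u_def v_def .
qed

lemma inner_lc_conn_bracket:
  "lc_conn br \<Phi> (br (P x) (P y)) (P y) \<bullet> x =
     (1/2) * (\<Phi> (br (P x) (P y)) \<bullet> br (P x) (P y)
       - br (P x) (P y) \<bullet> br x (P y) - br (P x) (P y) \<bullet> br (P x) y)"
proof -
  note PQ = selfadjoint_inversesD[OF inverses]
  define W where "W = br (P x) (P y)"
  have "lc_conn br \<Phi> W (P y) \<bullet> x = (1/2) * (br W (P y) \<bullet> x + br W y \<bullet> P x + br (P y) (\<Phi> W) \<bullet> P x)"
    unfolding inner_lc_conn by (simp add: PQ(3))
  also have "\<dots> = (1/2) * (\<Phi> W \<bullet> W - W \<bullet> br x (P y) - W \<bullet> br (P x) y)"
  proof -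
    have rot: "br (P y) w \<bullet> z = w \<bullet> br z (P y)" for w z
      by (rule inner_bracket_rotate)
    have rot_neg: "br W w \<bullet> z = - (W \<bullet> br z w)" for w z
      by (rule inner_bracket_rotate_neg)
    show ?thesis
      by (simp only: rot rot_neg W_def[symmetric]) simp
  qed
  finally show ?thesis
    unfolding W_def .
qed

lemma sec_k_eq_curvature_form: "sec_k br \<Phi> (P x) (P y) = curvature_form P \<Phi> x y"
proof -
  note PQ = selfadjoint_inversesD[OF inverses]
  have "sec_k br \<Phi> (P x) (P y) = curv br \<Phi> (P x) (P y) (P y) \<bullet> x"
    unfolding sec_k_def by (simp add: PQ(3,5))
  also have "\<dots> = lc_conn br \<Phi> (P x) (lc_conn br \<Phi> (P y) (P y)) \<bullet> x
      - lc_conn br \<Phi> (P y) (lc_conn br \<Phi> (P x) (P y)) \<bullet> x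
      - lc_conn br \<Phi> (br (P x) (P y)) (P y) \<bullet> x"
    unfolding curv_def by (simp add: inner_diff_left)
  also have "\<dots> = curvature_form P \<Phi> x y"
    unfolding inner_lc_conn_diag inner_lc_conn_inverses inner_lc_conn_bracket curvature_form_def
    by (simp add: inner_add_left inner_commute algebra_simps)
  finally show ?thesis .
qed

end

lemma curvature_form_le_shift:
  assumes PQ: "selfadjoint_inverses P \<Phi>" and PQ': "selfadjoint_inverses P' \<Phi>'"
    and shift: "\<And>v. P' v = P v + s *\<^sub>R v" and "s > 0" and nonneg: "\<And>z. 0 \<le> \<Phi> z \<bullet> z"
  shows "curvature_form P \<Phi> x y \<le> curvature_form P' \<Phi>' x y"
proof -
  note linP = selfadjoint_inversesD(1)[OF PQ]
  define u v W c f e where "u = br x (P y)" and "v = br (P x) y" and "W = br (P x) (P y)"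
    and "c = br x y" and "f = br (P x) x" and "e = br (P y) y"
  define b d where "b = u + v" and "d = v - u"
  define W' where "W' = W + s *\<^sub>R (b + s *\<^sub>R c)"
  have old: "curvature_form P \<Phi> x y = (1/2) * (b \<bullet> W) - (3/4) * (\<Phi> W \<bullet> W) + (1/4) * (d \<bullet> P d) - f \<bullet> P e"
    by (simp add: curvature_form_def u_def v_def W_def b_def d_def f_def e_def)
  have "br (P' x) (P' y) = W'"
    by (simp add: shift W'_def W_def b_def u_def v_def c_def algebra_simps)
  moreover have "br (P' x) y - br x (P' y) = d" "br (P' x) x = f"
    by (simp_all add: shift d_def u_def v_def f_def)
  moreover have "br x (P' y) + br (P' x) y = b + (2 * s) *\<^sub>R c"
    by (simp add: shift b_def u_def v_def c_def scaleR_2[symmetric] algebra_simps)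
  ultimately have new: "curvature_form P' \<Phi>' x y = (1/2) * ((b + (2 * s) *\<^sub>R c) \<bullet> W')
      - (3/4) * (\<Phi>' W' \<bullet> W') + (1/4) * (d \<bullet> P d + s * (d \<bullet> d)) - f \<bullet> P e - s * (f \<bullet> e)"
    by (simp add: curvature_form_def shift e_def linear_add[OF linP] linear_scale[OF linP]
        inner_add_right)
  have "\<Phi>' W' \<bullet> W' \<le> \<Phi> W \<bullet> W + (s *\<^sub>R (b + s *\<^sub>R c)) \<bullet> (s *\<^sub>R (b + s *\<^sub>R c)) / s"
    unfolding W'_def by (rule parallel_sum_inner_le[OF PQ PQ' shift \<open>s > 0\<close> nonneg])
  also have "\<dots> = \<Phi> W \<bullet> W + s * (b \<bullet> b) + 2 * s^2 * (b \<bullet> c) + s^3 * (c \<bullet> c)"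
    using \<open>s > 0\<close>
    by (simp add: inner_add_left inner_add_right inner_commute field_simps power2_eq_square
        power3_eq_cube)
  finally have parallel: "\<Phi>' W' \<bullet> W' \<le> \<Phi> W \<bullet> W + s * (b \<bullet> b) + 2 * s^2 * (b \<bullet> c) + s^3 * (c \<bullet> c)" .
  have jacobi: "c \<bullet> W = f \<bullet> e + u \<bullet> v"
    unfolding c_def W_def f_def e_def u_def v_def by (rule inner_bracket_jacobi)
  have "b \<bullet> b - d \<bullet> d = 4 * (u \<bullet> v)"
    by (simp add: b_def d_def inner_add_left inner_add_right inner_diff_left inner_diff_right
        inner_commute)
  \<comment> \<open>The terms quadratic in \<open>s\<close> cancel identically, the linear ones by the Jacobi identity.\<close>
  with parallel jacobi have "curvature_form P \<Phi> x y + s^3 / 4 * (c \<bullet> c) \<le> curvature_form P' \<Phi>' x y"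
    unfolding old new W'_def
    by (simp add: inner_add_left inner_add_right inner_commute algebra_simps power2_eq_square
        power3_eq_cube)
  moreover have "0 \<le> s^3 / 4 * (c \<bullet> c)"
    using \<open>s > 0\<close> by simp
  ultimately show ?thesis
    by linarith
qed

lemma curvature_form_scaleR:
  assumes "linear P" and "linear \<Phi>" and "t \<noteq> 0"
  shows "curvature_form (\<lambda>v. t *\<^sub>R P v) (\<lambda>v. (1/t) *\<^sub>R \<Phi> v) x y = t^3 * curvature_form P \<Phi> x y"
  using \<open>t \<noteq> 0\<close>
  by (simp add: curvature_form_def linear_scale[OF assms(1)] linear_scale[OF assms(2)]
      linear_diff[OF assms(1)] algebra_simps power2_eq_square power3_eq_cube)

lemma curvature_form_id: "curvature_form (\<lambda>v. v) (\<lambda>v. v) x y = (br x y \<bullet> br x y) / 4"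
  by (simp add: curvature_form_def scaleR_2[symmetric])

lemma kappa_psi_of_nonneg:
  assumes \<Phi>: "metric_matrix \<Phi>" and sec: "\<forall>x y. 0 \<le> sec_k br \<Phi> x y" and "0 \<le> t" "t < 1"
  shows "0 \<le> kappa br (psi_of \<Phi>) x y t"
proof -
  define P where "P = inv \<Phi>"
  have PQ: "selfadjoint_inverses P \<Phi>"
    unfolding P_def by (rule metric_matrix_selfadjoint_inverses[OF \<Phi>])
  define Pt Qt where "Pt = path_inv (psi_of \<Phi>) t" and "Qt = path_mat (psi_of \<Phi>) t"
  have Pt: "Pt v = t *\<^sub>R P v + (1 - t) *\<^sub>R v" for v
    unfolding Pt_def P_def path_inv_psi_of ..
  have PQt: "selfadjoint_inverses Pt Qt"
    using metric_matrix_selfadjoint_inverses[OF metric_matrix_path_inv[OF \<Phi> \<open>0 \<le> t\<close> \<open>t < 1\<close>]]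
    unfolding Pt_def Qt_def path_mat_def by (rule selfadjoint_inverses_commute)
  have kappa: "kappa br (psi_of \<Phi>) x y t = curvature_form Pt Qt x y"
    unfolding kappa_def Pt_def[symmetric] Qt_def[symmetric] by (rule sec_k_eq_curvature_form[OF PQt])
  show ?thesis
  proof (cases "t = 0")
    case True
    have Pt_id: "Pt = (\<lambda>v. v)"
      using Pt True by (simp add: fun_eq_iff)
    moreover have "Qt = (\<lambda>v. v)"
      using selfadjoint_inversesD(3)[OF PQt] by (simp add: fun_eq_iff Pt_id)
    ultimately show ?thesis
      unfolding kappa by (simp add: curvature_form_id)
  next
    case False
    with \<open>0 \<le> t\<close> have "t > 0" by simp
    have "0 \<le> t^3 * sec_k br \<Phi> (P x) (P y)"
      using sec \<open>t > 0\<close> by simp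
    also have "\<dots> = curvature_form (\<lambda>v. t *\<^sub>R P v) (\<lambda>v. (1/t) *\<^sub>R \<Phi> v) x y"
      using selfadjoint_inversesD(1,2)[OF PQ] False
      by (simp add: sec_k_eq_curvature_form[OF PQ] curvature_form_scaleR)
    also have "\<dots> \<le> curvature_form Pt Qt x y"
    proof (rule curvature_form_le_shift[OF selfadjoint_inverses_scaleR[OF PQ False] PQt Pt])
      show "0 < 1 - t"
        using \<open>t < 1\<close> by simp
      show "0 \<le> (1/t) *\<^sub>R \<Phi> z \<bullet> z" for z
        using metric_matrix_nonneg[OF \<Phi>, of z] \<open>t > 0\<close> by simp
    qed
    finally show ?thesis
      unfolding kappa .
  qed
qed

end

theorem mainTheorem1:
  fixes br :: "'a::euclidean_space \<Rightarrow> 'a \<Rightarrow> 'a" and \<Phi> :: "'a \<Rightarrow> 'a"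
  assumes "compact_lie_algebra br"
    and "metric_matrix \<Phi>"
    and "\<forall>X Y. 0 \<le> sec_k br \<Phi> X Y"
  shows "infinitesimally_nonneg br (psi_of \<Phi>)"
proof -
  interpret compact_lie_bracket br
    by (rule compact_lie_bracket.intro) fact
  show ?thesis
    unfolding infinitesimally_nonneg_def
    by (intro allI exI[of _ "1::real"])
      (auto intro: metric_matrix_path_inv[OF assms(2)] kappa_psi_of_nonneg[OF assms(2,3)])
qed

end
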